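(* Let $1\leq\delta\leq k$, let $V=\mathbb{F}_{q^k}\times\mathbb{F}_{q^k}$ viewed as a $2k$-dimensional $\mathbb{F}_q$-space, and let $\mathcal{G}=\mathcal{G}_{2k,k,\delta}$ be the set of all $\mathbb{F}_q$-subspaces $$G(a_0,\dots,a_{k-\delta})=\Big\{\big(x,\textstyle\sum_{i=0}^{k-\delta}a_ix^{q^i}\big):x\in\mathbb{F}_{q^k}\Big\},\qquad a_0,\dots,a_{k-\delta}\in\mathbb{F}_{q^k}.$$ Let $\perp$ denote orthogonality with respect to the nondegenerate $\mathbb{F}_q$-bilinear form $\langle(a,b),(x,y)\rangle=\mathrm{Tr}(ax+by)$, where $\mathrm{Tr}(z)=z+z^q+\dots+z^{q^{k-1}}$. Then there is an $\mathbb{F}_q$-linear bijection $\phi\colon V\to V$ with $\phi(X^\perp)\in\mathcal{G}$ for all $X\in\mathcal{G}$ and $\{\phi(X^\perp):X\in\mathcal{G}\}=\mathcal{G}$; consequently $\mathcal{G}$ is invariant under a correlation of the projective geometry $\mathrm{PG}(V)$. Moreover, every correlation of $\mathrm{PG}(V)$ mapping $\mathcal{G}$ onto itself fixes the subspace $S=\{0\}\times\mathbb{F}_{q^k}$.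
   Context: A correlation of $\mathrm{PG}(V)$ is an inclusion-reversing bijection of the set of subspaces of $V$ induced by a semilinear map composed with taking orthogonal complements (equivalently, an inclusion-reversing bijection of the subspace lattice). Each element of $\mathcal{G}$ is a $k$-dimensional subspace. *)

theory Defs
  imports Main "HOL-Computational_Algebra.Primes"
begin

text \<open>The big field F_{q^k} is a finite field type 'a with CARD('a) = q^k;
  the subfield F_q is the set of fixed points of the q-th power map.\<close>

definition Fq :: "nat \<Rightarrow> 'a::{finite,field} set" where
  "Fq q = {c. c ^ q = c}"

definition vsmult :: "'a::field \<Rightarrow> 'a \<times> 'a \<Rightarrow> 'a \<times> 'a" where
  "vsmult c v = (c * fst v, c * snd v)"

definition vadd :: "'a::field \<times> 'a \<Rightarrow> 'a \<times> 'a \<Rightarrow> 'a \<times> 'a" where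
  "vadd u v = (fst u + fst v, snd u + snd v)"

definition fq_subspace :: "nat \<Rightarrow> ('a::{finite,field} \<times> 'a) set \<Rightarrow> bool" where
  "fq_subspace q U \<longleftrightarrow> (0, 0) \<in> U \<and> (\<forall>u\<in>U. \<forall>w\<in>U. vadd u w \<in> U)
     \<and> (\<forall>c\<in>Fq q. \<forall>u\<in>U. vsmult c u \<in> U)"

definition fq_linear :: "nat \<Rightarrow> ('a::{finite,field} \<times> 'a \<Rightarrow> 'a \<times> 'a) \<Rightarrow> bool" where
  "fq_linear q f \<longleftrightarrow> (\<forall>u w. f (vadd u w) = vadd (f u) (f w))
     \<and> (\<forall>c\<in>Fq q. \<forall>u. f (vsmult c u) = vsmult c (f u))"

definition trace :: "nat \<Rightarrow> nat \<Rightarrow> 'a::field \<Rightarrow> 'a" where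
  "trace q k z = (\<Sum>i<k. z ^ (q ^ i))"

definition bform :: "nat \<Rightarrow> nat \<Rightarrow> 'a::field \<times> 'a \<Rightarrow> 'a \<times> 'a \<Rightarrow> 'a" where
  "bform q k u v = trace q k (fst u * fst v + snd u * snd v)"

definition perp :: "nat \<Rightarrow> nat \<Rightarrow> ('a::field \<times> 'a) set \<Rightarrow> ('a \<times> 'a) set" where
  "perp q k X = {v. \<forall>u\<in>X. bform q k u v = 0}"

definition gsub :: "nat \<Rightarrow> nat \<Rightarrow> nat \<Rightarrow> (nat \<Rightarrow> 'a::field) \<Rightarrow> ('a \<times> 'a) set" where
  "gsub q k \<delta> a = {(x, \<Sum>i\<le>k - \<delta>. a i * x ^ (q ^ i)) | x. True}"

definition Gcode :: "nat \<Rightarrow> nat \<Rightarrow> nat \<Rightarrow> ('a::field \<times> 'a) set set" where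
  "Gcode q k \<delta> = {gsub q k \<delta> a | a. True}"

definition subspaces :: "nat \<Rightarrow> ('a::{finite,field} \<times> 'a) set set" where
  "subspaces q = {U. fq_subspace q U}"

definition correlation :: "nat \<Rightarrow> (('a::{finite,field} \<times> 'a) set \<Rightarrow> ('a \<times> 'a) set) \<Rightarrow> bool" where
  "correlation q c \<longleftrightarrow> bij_betw c (subspaces q) (subspaces q)
     \<and> (\<forall>U\<in>subspaces q. \<forall>W\<in>subspaces q. U \<subseteq> W \<longleftrightarrow> c W \<subseteq> c U)"

end

theory Submission
  imports Defs "HOL-Number_Theory.Residues" "HOL-Computational_Algebra.Polynomial"
begin

text \<open>
  The adjoint of the linearized polynomial f(x) = sum_i a_i x^(q^i) with respect to the form
  (x, y) |-> Tr(x y) is f*(y) = sum_i (a_i y)^(q^(k-i)), because Tr is invariant under Frobenius.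
  Hence G(a)^perp = {(-f*(y), y)}, and phi(x, y) = (y^(q^delta), -x) maps it onto G(a') with
  a'_j = a_(k-delta-j)^(q^(delta+j)); as Frobenius is bijective, every member of the family
  arises in this way. Counting gives |W| |W^perp| = |V| for every subspace W, so W^perp^perp = W
  and X |-> phi(X^perp) is a correlation.

  For the last claim note that S = {0} x F is the largest subspace meeting every member of the
  family trivially, since a vector (x, y) with x ~= 0 lies in G(y/x, 0, ..., 0). A correlation
  preserving the family therefore maps S to the smallest subspace that spans V together with
  every member of the family; this subspace does not depend on the correlation, and the
  correlation X |-> phi(X^perp) fixes S.
\<close>

lemma power_card_UNIV_eq_self:
  fixes x :: "'a::{finite,field}"
  shows "x ^ card (UNIV :: 'a set) = x"
proof (cases "x = 0")
  case False
  define N where "N = UNIV - {0::'a}"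
  have "x ^ card N * \<Prod>N = (\<Prod>y\<in>N. x * y)"
    by (simp add: prod.distrib)
  also have "\<dots> = \<Prod>N"
    by (rule prod.reindex_bij_witness[of _ "\<lambda>y. y / x" "\<lambda>y. x * y"]) (use False in \<open>auto simp: N_def\<close>)
  finally have "x ^ card N = 1"
    by (simp add: N_def)
  moreover have "card (UNIV :: 'a set) = Suc (card N)"
    using finite_UNIV_card_ge_0[where 'a='a] by (simp add: N_def card_Diff_singleton)
  ultimately show ?thesis
    by simp
qed (simp add: power_0_left finite_UNIV_card_ge_0)

lemma two_le_card_UNIV: "2 \<le> card (UNIV :: 'a::{finite,field} set)"
  using card_mono[of UNIV "{0::'a, 1}"] by simp

lemma prime_CHAR_finite_field: "prime CHAR('a::{finite,field})"
  by (rule prime_CHAR_semidom) (simp add: finite_imp_CHAR_pos)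

lemma CHAR_eq_prime_of_card_UNIV:
  assumes "prime p" "card (UNIV :: 'a::{finite,field} set) = p ^ n"
  shows "CHAR('a) = p"
proof -
  have "CHAR('a) dvd p ^ n"
    using CHAR_dvd_CARD[where 'a='a] assms(2) by simp
  then have "CHAR('a) dvd p"
    using prime_CHAR_finite_field prime_dvd_power by blast
  then show ?thesis
    using prime_CHAR_finite_field assms(1) primes_dvd_imp_eq by blast
qed

lemma Fq_one: "(1::'a::{finite,field}) \<in> Fq q"
  by (simp add: Fq_def)

lemma Fq_mult: "(a::'a::{finite,field}) \<in> Fq q \<Longrightarrow> b \<in> Fq q \<Longrightarrow> a * b \<in> Fq q"
  by (simp add: Fq_def power_mult_distrib)

lemma Fq_divide: "a \<in> Fq q \<Longrightarrow> b \<in> Fq q \<Longrightarrow> (a::'a::{finite,field}) / b \<in> Fq q"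
  by (simp add: Fq_def power_divide)

lemma Fq_power_q_power: "c \<in> Fq q \<Longrightarrow> c ^ (q ^ i) = c"
  by (induction i) (simp_all add: Fq_def power_mult)

lemma vadd_Pair [simp]: "vadd (a, b) (c, d) = (a + c, b + d)"
  by (simp add: vadd_def)

lemma vsmult_Pair [simp]: "vsmult c (a, b) = (c * a, c * b)"
  by (simp add: vsmult_def)

lemma bform_Pair: "bform q k (a, b) (c, d) = trace q k (a * c + b * d)"
  by (simp add: bform_def)

lemma fq_subspace_Int:
  "fq_subspace q U \<Longrightarrow> fq_subspace q W \<Longrightarrow> fq_subspace q (U \<inter> W)"
  unfolding fq_subspace_def by blast

lemma fq_linear_zero:
  assumes "fq_linear q f"
  shows "f (0, 0) = (0, 0)"
proof -
  obtain a b where ab: "f (0, 0) = (a, b)"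
    by fastforce
  have "f (0, 0) = vadd (f (0, 0)) (f (0, 0))"
    using assms unfolding fq_linear_def by (metis add_0 vadd_Pair)
  then show ?thesis
    unfolding ab by (metis add_cancel_right_right vadd_Pair prod.inject)
qed

lemma fq_subspace_image:
  assumes f: "fq_linear q f" and U: "fq_subspace q U"
  shows "fq_subspace q (f ` U)"
  unfolding fq_subspace_def
proof (intro conjI ballI)
  show "(0, 0) \<in> f ` U"
    using U fq_linear_zero[OF f] unfolding fq_subspace_def by force
next
  fix u w assume "u \<in> f ` U" "w \<in> f ` U"
  then obtain u' w' where "u' \<in> U" "w' \<in> U" "u = f u'" "w = f w'"
    by blast
  then show "vadd u w \<in> f ` U"
    using f U unfolding fq_linear_def fq_subspace_def by (metis image_eqI)
next
  show "vsmult c u \<in> f ` U" if c: "c \<in> Fq q" and "u \<in> f ` U" for c u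
  proof -
    obtain u' where "u' \<in> U" "u = f u'"
      using \<open>u \<in> f ` U\<close> by blast
    moreover have "vsmult c u' \<in> U" and "f (vsmult c u') = vsmult c (f u')"
      using c \<open>u' \<in> U\<close> f U unfolding fq_linear_def fq_subspace_def by blast+
    ultimately show ?thesis
      by (metis image_eqI)
  qed
qed

lemma fq_subspace_vimage:
  assumes f: "fq_linear q f" and U: "fq_subspace q U"
  shows "fq_subspace q (f -` U)"
  using U fq_linear_zero[OF f] f unfolding fq_subspace_def fq_linear_def by (simp add: vimage_def)

lemma perp_antimono: "X \<subseteq> Y \<Longrightarrow> perp q k Y \<subseteq> perp q k X"
  by (auto simp: perp_def)

definition plus_line :: "nat \<Rightarrow> ('a::{finite,field} \<times> 'a) set \<Rightarrow> 'a \<times> 'a \<Rightarrow> ('a \<times> 'a) set" where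
  "plus_line q W v = {vadd w (vsmult c v) | w c. w \<in> W \<and> c \<in> Fq q}"

lemma plus_line_subset:
  "fq_subspace q U \<Longrightarrow> W \<subseteq> U \<Longrightarrow> v \<in> U \<Longrightarrow> plus_line q W v \<subseteq> U"
  unfolding plus_line_def fq_subspace_def by blast

section \<open>Antitone bijections of a lattice of sets\<close>

text \<open>
  In the lattice L, W meets every member of G in the bottom element (resp. joins it to the top
  element); both are phrased through bounds, so L need not be closed under meets and joins.
\<close>

definition meets_bot :: "'b set set \<Rightarrow> 'b set set \<Rightarrow> 'b set \<Rightarrow> bool" where
  "meets_bot L G W \<longleftrightarrow> (\<forall>X\<in>G. \<forall>Z\<in>L. Z \<subseteq> W \<longrightarrow> Z \<subseteq> X \<longrightarrow> (\<forall>Z'\<in>L. Z \<subseteq> Z'))"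

definition joins_top :: "'b set set \<Rightarrow> 'b set set \<Rightarrow> 'b set \<Rightarrow> bool" where
  "joins_top L G W \<longleftrightarrow> (\<forall>X\<in>G. \<forall>Z\<in>L. W \<subseteq> Z \<longrightarrow> X \<subseteq> Z \<longrightarrow> (\<forall>Z'\<in>L. Z' \<subseteq> Z))"

lemma antitone_bij_joins_top_iff_meets_bot:
  assumes c: "bij_betw c L L" "\<forall>U\<in>L. \<forall>W\<in>L. U \<subseteq> W \<longleftrightarrow> c W \<subseteq> c U"
    and G: "G \<subseteq> L" "c ` G = G" and W: "W \<in> L"
  shows "joins_top L G (c W) \<longleftrightarrow> meets_bot L G W"
proof -
  have anti: "U \<subseteq> V \<longleftrightarrow> c V \<subseteq> c U" if "U \<in> L" "V \<in> L" for U V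
    using c(2) that by blast
  show ?thesis
  proof
    assume top: "joins_top L G (c W)"
    show "meets_bot L G W"
      unfolding meets_bot_def
    proof (intro ballI impI)
      fix X Z Z' assume X: "X \<in> G" and Z: "Z \<in> L" "Z \<subseteq> W" "Z \<subseteq> X" and Z': "Z' \<in> L"
      have "c W \<subseteq> c Z"
        using anti[OF Z(1) W] Z(2) by blast
      moreover have "c X \<subseteq> c Z"
        using anti[OF Z(1), of X] X G(1) Z(3) by blast
      moreover have "c X \<in> G"
        using X G(2) by (metis imageI)
      moreover have "c Z \<in> L" "c Z' \<in> L"
        using Z(1) Z' bij_betw_apply[OF c(1)] by auto
      ultimately have "c Z' \<subseteq> c Z"
        using top unfolding joins_top_def by blast
      then show "Z \<subseteq> Z'"
        using anti[OF Z(1) Z'] by simp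
    qed
  next
    assume bot: "meets_bot L G W"
    show "joins_top L G (c W)"
      unfolding joins_top_def
    proof (intro ballI impI)
      fix Y Z Z' assume Y: "Y \<in> G" and Z: "Z \<in> L" "c W \<subseteq> Z" "Y \<subseteq> Z" and Z': "Z' \<in> L"
      obtain X where X: "X \<in> G" "Y = c X"
        using Y G(2) by (metis imageE)
      obtain Z0 Z1 where Z0: "Z0 \<in> L" "Z = c Z0" and Z1: "Z1 \<in> L" "Z' = c Z1"
        using Z(1) Z' bij_betw_imp_surj_on[OF c(1)] by (metis imageE)
      have "Z0 \<subseteq> W"
        using anti[OF Z0(1) W] Z0(2) Z(2) by blast
      moreover have "Z0 \<subseteq> X"
        using anti[OF Z0(1), of X] X G(1) Z0(2) Z(3) by blast
      ultimately have "Z0 \<subseteq> Z1"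
        using bot X(1) Z0(1) Z1(1) unfolding meets_bot_def by blast
      then show "Z' \<subseteq> Z"
        using anti[OF Z0(1) Z1(1)] Z0(2) Z1(2) by simp
    qed
  qed
qed

lemma antitone_bij_image_greatest_meets_bot_least:
  assumes c: "bij_betw c L L" "\<forall>U\<in>L. \<forall>W\<in>L. U \<subseteq> W \<longleftrightarrow> c W \<subseteq> c U"
    and G: "G \<subseteq> L" "c ` G = G"
    and S: "S \<in> L" "\<And>W. W \<in> L \<Longrightarrow> meets_bot L G W \<Longrightarrow> W \<subseteq> S"
    and W: "W \<in> L" "joins_top L G W"
  shows "c S \<subseteq> W"
proof -
  obtain W0 where W0: "W0 \<in> L" "W = c W0"
    using W(1) bij_betw_imp_surj_on[OF c(1)] by (metis imageE)
  then have "meets_bot L G W0"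
    using antitone_bij_joins_top_iff_meets_bot[OF c G W0(1)] W(2) by simp
  then have "W0 \<subseteq> S"
    using S(2) W0(1) by blast
  then show ?thesis
    using c(2) S(1) W0 by blast
qed

lemma antitone_bijs_agree_on_greatest_meets_bot:
  assumes c: "bij_betw c L L" "\<forall>U\<in>L. \<forall>W\<in>L. U \<subseteq> W \<longleftrightarrow> c W \<subseteq> c U" "c ` G = G"
    and c': "bij_betw c' L L" "\<forall>U\<in>L. \<forall>W\<in>L. U \<subseteq> W \<longleftrightarrow> c' W \<subseteq> c' U" "c' ` G = G"
    and G: "G \<subseteq> L"
    and S: "S \<in> L" "meets_bot L G S" "\<And>W. W \<in> L \<Longrightarrow> meets_bot L G W \<Longrightarrow> W \<subseteq> S"
  shows "c S = c' S"
proof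
  have "joins_top L G (c' S)"
    using antitone_bij_joins_top_iff_meets_bot[OF c'(1,2) G c'(3) S(1)] S(2) by simp
  then show "c S \<subseteq> c' S"
    using antitone_bij_image_greatest_meets_bot_least[OF c(1,2) G c(3) S(1,3)]
      bij_betw_apply[OF c'(1) S(1)] by simp
  have "joins_top L G (c S)"
    using antitone_bij_joins_top_iff_meets_bot[OF c(1,2) G c(3) S(1)] S(2) by simp
  then show "c' S \<subseteq> c S"
    using antitone_bij_image_greatest_meets_bot_least[OF c'(1,2) G c'(3) S(1,3)]
      bij_betw_apply[OF c(1) S(1)] by simp
qed

definition linpoly :: "nat \<Rightarrow> nat \<Rightarrow> nat \<Rightarrow> (nat \<Rightarrow> 'a::field) \<Rightarrow> 'a \<Rightarrow> 'a" where
  "linpoly q k \<delta> a x = (\<Sum>i\<le>k - \<delta>. a i * x ^ (q ^ i))"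

definition linpoly_adjoint :: "nat \<Rightarrow> nat \<Rightarrow> nat \<Rightarrow> (nat \<Rightarrow> 'a::field) \<Rightarrow> 'a \<Rightarrow> 'a" where
  "linpoly_adjoint q k \<delta> a y = (\<Sum>i\<le>k - \<delta>. (a i * y) ^ (q ^ (k - i)))"

definition phi :: "nat \<Rightarrow> nat \<Rightarrow> 'a::field \<times> 'a \<Rightarrow> 'a \<times> 'a" where
  "phi q \<delta> v = (snd v ^ (q ^ \<delta>), - fst v)"

lemma gsub_eq_range: "gsub q k \<delta> a = range (\<lambda>x. (x, linpoly q k \<delta> a x))"
  by (auto simp: gsub_def linpoly_def)

lemma linpoly_adjoint_eq_linpoly:
  assumes "\<delta> \<le> k"
  shows "linpoly_adjoint q k \<delta> a y
    = linpoly q k \<delta> (\<lambda>j. a (k - \<delta> - j) ^ (q ^ (\<delta> + j))) (y ^ (q ^ \<delta>))"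
proof -
  have "linpoly_adjoint q k \<delta> a y = (\<Sum>j\<le>k - \<delta>. (a (k - \<delta> - j) * y) ^ (q ^ (k - (k - \<delta> - j))))"
    unfolding linpoly_adjoint_def using sum.atLeastAtMost_rev[of _ 0 "k - \<delta>"]
    by (simp add: atLeast0AtMost)
  also have "\<dots> = linpoly q k \<delta> (\<lambda>j. a (k - \<delta> - j) ^ (q ^ (\<delta> + j))) (y ^ (q ^ \<delta>))"
    unfolding linpoly_def
  proof (intro sum.cong refl)
    fix j assume "j \<in> {..k - \<delta>}"
    then have "k - (k - \<delta> - j) = \<delta> + j"
      using assms by simp
    then show "(a (k - \<delta> - j) * y) ^ (q ^ (k - (k - \<delta> - j)))
        = a (k - \<delta> - j) ^ (q ^ (\<delta> + j)) * (y ^ (q ^ \<delta>)) ^ (q ^ j)"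
      by (simp add: power_mult_distrib power_add flip: power_mult)
  qed
  finally show ?thesis .
qed

context
  fixes q m :: nat
  assumes q_CHAR_power: "q = CHAR('a::{finite,field}) ^ m"
begin

section \<open>The Frobenius map and the subfield\<close>

lemma q_pos: "q > 0"
  using prime_CHAR_finite_field[where 'a='a] by (simp add: q_CHAR_power prime_gt_0_nat)

lemma frobenius_add: "((x::'a) + y) ^ (q ^ i) = x ^ (q ^ i) + y ^ (q ^ i)"
  by (rule freshmans_dream'[where n="m * i"])
    (simp_all add: prime_CHAR_finite_field q_CHAR_power power_mult)

lemma frobenius_sum: "(\<Sum>j\<in>A. f j :: 'a) ^ (q ^ i) = (\<Sum>j\<in>A. f j ^ (q ^ i))"
  by (rule freshmans_dream_sum'[where n="m * i"])
    (simp_all add: prime_CHAR_finite_field q_CHAR_power power_mult)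

lemma frobenius_uminus: "(- (x::'a)) ^ (q ^ i) = - (x ^ (q ^ i))"
proof -
  have "x ^ (q ^ i) + (- x) ^ (q ^ i) = 0"
    using q_pos by (simp flip: frobenius_add)
  then show ?thesis
    by (simp add: eq_neg_iff_add_eq_0 add.commute)
qed

lemma frobenius_diff: "((x::'a) - y) ^ (q ^ i) = x ^ (q ^ i) - y ^ (q ^ i)"
  using frobenius_add[of x "- y" i] by (simp add: frobenius_uminus)

lemma frobenius_eq_iff: "(x::'a) ^ (q ^ i) = y ^ (q ^ i) \<longleftrightarrow> x = y"
proof
  assume "x ^ (q ^ i) = y ^ (q ^ i)"
  then have "(x - y) ^ (q ^ i) = 0"
    by (simp add: frobenius_diff)
  then show "x = y"
    by simp
qed simp

lemma frobenius_surj: "\<exists>x::'a. x ^ (q ^ i) = y"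
proof -
  have "inj (\<lambda>x::'a. x ^ (q ^ i))"
    by (rule injI) (simp add: frobenius_eq_iff)
  then have "surj (\<lambda>x::'a. x ^ (q ^ i))"
    by (simp add: finite_UNIV_inj_surj)
  then show ?thesis
    by (metis surjD)
qed

lemma Fq_zero: "(0::'a) \<in> Fq q"
  using q_pos by (simp add: Fq_def)

lemma Fq_add: "(a::'a) \<in> Fq q \<Longrightarrow> b \<in> Fq q \<Longrightarrow> a + b \<in> Fq q"
  using frobenius_add[of a b 1] by (simp add: Fq_def)

lemma Fq_uminus: "(a::'a) \<in> Fq q \<Longrightarrow> - a \<in> Fq q"
  using frobenius_uminus[of a 1] by (simp add: Fq_def)

lemma Fq_diff: "(a::'a) \<in> Fq q \<Longrightarrow> b \<in> Fq q \<Longrightarrow> a - b \<in> Fq q"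
  using frobenius_diff[of a b 1] by (simp add: Fq_def)

lemma fq_subspace_diff:
  "fq_subspace q U \<Longrightarrow> u \<in> U \<Longrightarrow> w \<in> U \<Longrightarrow> vadd u (vsmult (- 1) w) \<in> (U :: ('a \<times> 'a) set)"
  using Fq_uminus[OF Fq_one] unfolding fq_subspace_def by blast

lemma fq_subspace_plus_line:
  assumes W: "fq_subspace q W"
  shows "fq_subspace q (plus_line q W (v::'a \<times> 'a))"
  unfolding fq_subspace_def
proof (intro conjI ballI)
  show "(0, 0) \<in> plus_line q W v"
    using W Fq_zero unfolding plus_line_def fq_subspace_def by (cases v) force
next
  fix x y assume "x \<in> plus_line q W v" "y \<in> plus_line q W v"
  then obtain w1 c1 w2 c2 where "x = vadd w1 (vsmult c1 v)" "y = vadd w2 (vsmult c2 v)"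
    and "w1 \<in> W" "w2 \<in> W" "c1 \<in> Fq q" "c2 \<in> Fq q"
    unfolding plus_line_def by blast
  moreover have "vadd x y = vadd (vadd w1 w2) (vsmult (c1 + c2) v)"
    if "x = vadd w1 (vsmult c1 v)" "y = vadd w2 (vsmult c2 v)"
    using that by (cases v; cases w1; cases w2) (simp add: algebra_simps)
  ultimately show "vadd x y \<in> plus_line q W v"
    using W Fq_add unfolding plus_line_def fq_subspace_def by blast
next
  fix d :: 'a and x assume "d \<in> Fq q" "x \<in> plus_line q W v"
  then obtain w c where "x = vadd w (vsmult c v)" "w \<in> W" "c \<in> Fq q"
    unfolding plus_line_def by blast
  moreover have "vsmult d x = vadd (vsmult d w) (vsmult (d * c) v)" if "x = vadd w (vsmult c v)"
    using that by (cases v; cases w) (simp add: algebra_simps)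
  ultimately show "vsmult d x \<in> plus_line q W v"
    using W Fq_mult \<open>d \<in> Fq q\<close> unfolding plus_line_def fq_subspace_def by blast
qed

lemma subset_plus_line: "W \<subseteq> plus_line q W (v::'a \<times> 'a)"
proof
  fix w assume "w \<in> W"
  moreover have "w = vadd w (vsmult 0 v)"
    by (cases w; cases v) simp
  ultimately show "w \<in> plus_line q W v"
    unfolding plus_line_def using Fq_zero by blast
qed

lemma mem_plus_line: "fq_subspace q W \<Longrightarrow> v \<in> plus_line q W (v::'a \<times> 'a)"
  unfolding plus_line_def fq_subspace_def using Fq_one by (cases v) force

lemma card_plus_line:
  assumes W: "fq_subspace q W" and v: "v \<notin> W"
  shows "card (plus_line q W (v::'a \<times> 'a)) = card (Fq q :: 'a set) * card W"
proof -
  let ?f = "\<lambda>(w, c). vadd w (vsmult c v)"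
  have "inj_on ?f (W \<times> Fq q)"
  proof (rule inj_onI, clarify)
    fix w1 c1 w2 c2
    assume w: "w1 \<in> W" "w2 \<in> W" and c: "c1 \<in> Fq q" "c2 \<in> Fq q"
      and eq: "vadd w1 (vsmult c1 v) = vadd w2 (vsmult c2 v)"
    have "c1 = c2"
    proof (rule ccontr)
      assume "c1 \<noteq> c2"
      then have "v = vsmult (inverse (c1 - c2)) (vadd w2 (vsmult (- 1) w1))"
        using eq by (cases v; cases w1; cases w2) (auto simp: field_simps)
      moreover have "inverse (c1 - c2) \<in> Fq q"
        using Fq_divide[OF Fq_one Fq_diff[OF c]] by (simp add: inverse_eq_divide)
      then have "vsmult (inverse (c1 - c2)) (vadd w2 (vsmult (- 1) w1)) \<in> W"
        using W fq_subspace_diff[OF W w(2,1)] unfolding fq_subspace_def by blast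
      ultimately show False
        using v by simp
    qed
    then show "w1 = w2 \<and> c1 = c2"
      using eq by (cases v; cases w1; cases w2) auto
  qed
  moreover have "plus_line q W v = ?f ` (W \<times> Fq q)"
    unfolding plus_line_def by auto
  ultimately show ?thesis
    by (simp add: card_image card_cartesian_product mult.commute)
qed

lemma linpoly_zero: "linpoly q k \<delta> a (0::'a) = 0"
  using q_pos by (simp add: linpoly_def power_0_left)

lemma linpoly_add: "linpoly q k \<delta> a ((x::'a) + y) = linpoly q k \<delta> a x + linpoly q k \<delta> a y"
  by (simp add: linpoly_def frobenius_add sum.distrib algebra_simps)

lemma linpoly_Fq_mult: "c \<in> Fq q \<Longrightarrow> linpoly q k \<delta> a (c * (x::'a)) = c * linpoly q k \<delta> a x"
  by (simp add: linpoly_def power_mult_distrib Fq_power_q_power sum_distrib_left algebra_simps)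

lemma fq_subspace_gsub: "fq_subspace q (gsub q k \<delta> (a :: nat \<Rightarrow> 'a))"
proof -
  let ?graph = "\<lambda>v::'a \<times> 'a. (fst v, linpoly q k \<delta> a (fst v))"
  have "fq_linear q ?graph"
    by (simp add: fq_linear_def vadd_def vsmult_def linpoly_add linpoly_Fq_mult)
  moreover have "gsub q k \<delta> a = ?graph ` UNIV"
    unfolding gsub_eq_range by (auto simp: image_iff)
  ultimately show ?thesis
    using fq_subspace_image[of q ?graph UNIV] by (simp add: fq_subspace_def)
qed

lemma meets_bot_S: "meets_bot (subspaces q) (Gcode q k \<delta>) ({0} \<times> (UNIV :: 'a set))"
  unfolding meets_bot_def
proof (intro ballI impI)
  fix X Z Z' :: "('a \<times> 'a) set"
  assume "X \<in> Gcode q k \<delta>" "Z \<subseteq> {0} \<times> UNIV" "Z \<subseteq> X" "Z' \<in> subspaces q"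
  moreover have "(0, y) \<in> gsub q k \<delta> a \<Longrightarrow> y = 0" for y :: 'a and a
    by (auto simp: gsub_eq_range linpoly_zero)
  ultimately have "Z \<subseteq> {(0, 0)}" "(0, 0) \<in> Z'"
    by (auto simp: Gcode_def subspaces_def fq_subspace_def)
  then show "Z \<subseteq> Z'"
    by blast
qed

lemma meets_bot_imp_subset_S:
  assumes W: "W \<in> subspaces q" "meets_bot (subspaces q) (Gcode q k \<delta>) W"
  shows "W \<subseteq> {0} \<times> (UNIV :: 'a set)"
proof (rule subsetI, rule ccontr)
  fix w assume "w \<in> W" "w \<notin> {0} \<times> UNIV"
  then obtain x y where w: "w = (x, y)" "x \<noteq> 0"
    by (cases w) simp
  define a where "a i = (if i = 0 then y / x else 0)" for i :: nat
  define X where "X = gsub q k \<delta> a"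
  have "linpoly q k \<delta> a x = (\<Sum>i\<le>k - \<delta>. if i = 0 then y / x * x else 0)"
    unfolding linpoly_def a_def by (intro sum.cong) auto
  then have "linpoly q k \<delta> a x = y"
    using w(2) by simp
  then have "w \<in> X"
    unfolding X_def gsub_eq_range w(1) by (metis rangeI)
  have "X \<in> Gcode q k \<delta>"
    by (auto simp: X_def Gcode_def)
  moreover have "W \<inter> X \<in> subspaces q"
    using W(1) fq_subspace_Int[OF _ fq_subspace_gsub] by (simp add: X_def subspaces_def)
  moreover have "{(0, 0)} \<in> subspaces q"
    by (simp add: subspaces_def fq_subspace_def)
  ultimately have "W \<inter> X \<subseteq> {(0, 0)}"
    using W(2) unfolding meets_bot_def by (meson Int_lower1 Int_lower2)
  then show False
    using \<open>w \<in> X\<close> \<open>w \<in> W\<close> w by auto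
qed

lemma fq_linear_phi: "fq_linear q (phi q \<delta> :: 'a \<times> 'a \<Rightarrow> 'a \<times> 'a)"
  by (simp add: fq_linear_def phi_def vadd_def vsmult_def frobenius_add power_mult_distrib
      Fq_power_q_power)

lemma bij_phi: "bij (phi q \<delta> :: 'a \<times> 'a \<Rightarrow> 'a \<times> 'a)"
proof -
  have "inj (phi q \<delta> :: 'a \<times> 'a \<Rightarrow> 'a \<times> 'a)"
    by (rule injI) (simp add: phi_def frobenius_eq_iff prod_eq_iff)
  then show ?thesis
    by (simp add: bij_def finite_UNIV_inj_surj)
qed

context
  fixes k :: nat
  assumes card_UNIV: "card (UNIV :: 'a set) = q ^ k"
begin

lemma q_ge_2: "q \<ge> 2"
proof (rule ccontr)
  assume "\<not> q \<ge> 2"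
  then have "card (UNIV :: 'a set) = 1"
    using q_pos card_UNIV by simp
  then show False
    using two_le_card_UNIV[where 'a='a] by simp
qed

lemma k_pos: "k > 0"
  using card_UNIV two_le_card_UNIV[where 'a='a] by (cases k) simp_all

lemma power_q_power_k: "(x::'a) ^ (q ^ k) = x"
  using power_card_UNIV_eq_self[of x] by (simp add: card_UNIV)

lemma trace_add: "trace q k ((x::'a) + y) = trace q k x + trace q k y"
  by (simp add: trace_def frobenius_add sum.distrib)

lemma trace_sum: "trace q k (\<Sum>j\<in>A. f j :: 'a) = (\<Sum>j\<in>A. trace q k (f j))"
  unfolding trace_def frobenius_sum by (rule sum.swap)

lemma trace_Fq_mult: "c \<in> Fq q \<Longrightarrow> trace q k (c * (x::'a)) = c * trace q k x"
  by (simp add: trace_def power_mult_distrib Fq_power_q_power sum_distrib_left)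

lemma trace_power_q: "trace q k ((z::'a) ^ q) = trace q k z"
proof -
  have "trace q k (z ^ q) = (\<Sum>i<k. z ^ (q ^ Suc i))"
    unfolding trace_def by (simp add: power_mult[symmetric] mult.commute)
  also have "\<dots> = (\<Sum>i<Suc k. z ^ (q ^ i)) - z"
    by (subst sum.lessThan_Suc_shift) simp
  also have "\<dots> = trace q k z"
    by (simp add: trace_def power_q_power_k)
  finally show ?thesis .
qed

lemma trace_power_q_power: "trace q k ((z::'a) ^ (q ^ i)) = trace q k z"
proof (induction i)
  case (Suc i)
  have "z ^ (q ^ Suc i) = (z ^ (q ^ i)) ^ q"
    by (simp add: power_mult[symmetric] mult.commute)
  then show ?case
    using Suc trace_power_q by simp
qed simp

lemma trace_in_Fq: "trace q k (z::'a) \<in> Fq q"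
  using frobenius_sum[of "\<lambda>i. z ^ (q ^ i)" "{..<k}" 1] trace_power_q[of z]
  by (simp add: Fq_def trace_def power_mult[symmetric] mult.commute)

lemma trace_not_identically_zero: "\<exists>z::'a. trace q k z \<noteq> 0"
  \<comment> \<open>Tr is a nonzero polynomial of degree q^(k-1) < |F|.\<close>
proof (rule ccontr)
  assume "\<not> (\<exists>z::'a. trace q k z \<noteq> 0)"
  define P :: "'a poly" where "P = (\<Sum>i<k. monom 1 (q ^ i))"
  have roots: "{x. poly P x = 0} = UNIV"
    using \<open>\<not> (\<exists>z. trace q k z \<noteq> 0)\<close> by (simp add: P_def trace_def poly_sum poly_monom)
  have coeff_P: "coeff P n = (\<Sum>i<k. if q ^ i = n then 1 else 0)" for n
    by (simp add: P_def coeff_sum coeff_monom)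
  have q_power_inj: "q ^ i = q ^ j \<longleftrightarrow> i = j" for i j
    using q_ge_2 by (simp add: power_inject_exp)
  have "coeff P (q ^ (k - 1)) = 1"
    using k_pos by (simp add: coeff_P q_power_inj)
  then have "P \<noteq> 0"
    by auto
  have "degree P \<le> q ^ (k - 1)"
  proof (rule degree_le, intro allI impI)
    fix n assume "q ^ (k - 1) < n"
    moreover have "q ^ i \<le> q ^ (k - 1)" if "i < k" for i
      using that q_ge_2 by (intro power_increasing) auto
    ultimately show "coeff P n = 0"
      unfolding coeff_P by (intro sum.neutral) (metis not_le lessThan_iff)
  qed
  moreover have "card {x. poly P x = 0} \<le> degree P"
    by (rule card_poly_roots_bound) fact
  ultimately have "q ^ k \<le> q ^ (k - 1)"
    using roots card_UNIV by simp
  moreover have "q ^ (k - 1) < q ^ k"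
    using q_ge_2 k_pos by (intro power_strict_increasing) auto
  ultimately show False
    by simp
qed

lemma trace_mult_eq_zero_imp_eq_zero:
  assumes "\<And>x::'a. trace q k (x * z) = 0"
  shows "z = 0"
proof (rule ccontr)
  assume "z \<noteq> 0"
  obtain w :: 'a where "trace q k w \<noteq> 0"
    using trace_not_identically_zero by blast
  moreover have "trace q k (w / z * z) = 0"
    by (rule assms)
  ultimately show False
    using \<open>z \<noteq> 0\<close> by simp
qed

lemma bform_add_left: "bform q k (vadd u u') (v::'a \<times> 'a) = bform q k u v + bform q k u' v"
  by (cases u; cases u'; cases v) (simp add: bform_Pair trace_add[symmetric] algebra_simps)

lemma bform_add_right: "bform q k v (vadd u u') = bform q k (v::'a \<times> 'a) u + bform q k v u'"
  by (cases u; cases u'; cases v) (simp add: bform_Pair trace_add[symmetric] algebra_simps)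

lemma bform_smult_left: "c \<in> Fq q \<Longrightarrow> bform q k (vsmult c u) (v::'a \<times> 'a) = c * bform q k u v"
  by (cases u; cases v) (simp add: bform_Pair trace_Fq_mult[symmetric] algebra_simps)

lemma bform_smult_right: "c \<in> Fq q \<Longrightarrow> bform q k v (vsmult c u) = c * bform q k (v::'a \<times> 'a) u"
  by (cases u; cases v) (simp add: bform_Pair trace_Fq_mult[symmetric] algebra_simps)

lemma bform_zero_right: "bform q k (v::'a \<times> 'a) (0, 0) = 0"
  using q_pos by (cases v) (simp add: bform_Pair trace_def power_0_left)

lemma bform_commute: "bform q k u (v::'a \<times> 'a) = bform q k v u"
  by (cases u; cases v) (simp add: bform_Pair algebra_simps)

lemma bform_in_Fq: "bform q k u (v::'a \<times> 'a) \<in> Fq q"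
  by (simp add: bform_def trace_in_Fq)

lemma perp_subspace: "fq_subspace q (perp q k (X :: ('a \<times> 'a) set))"
  unfolding fq_subspace_def perp_def
  by (simp add: bform_zero_right bform_add_right bform_smult_right)

lemma subset_perp_perp: "X \<subseteq> perp q k (perp q k (X :: ('a \<times> 'a) set))"
  by (auto simp: perp_def bform_commute)

lemma perp_zero: "perp q k {(0, 0)} = (UNIV :: ('a \<times> 'a) set)"
  by (auto simp: perp_def bform_commute[of "(0, 0)"] bform_zero_right)

lemma perp_UNIV: "perp q k UNIV = {(0 :: 'a, 0 :: 'a)}"
proof (intro equalityI subsetI)
  fix u :: "'a \<times> 'a" assume "u \<in> perp q k UNIV"
  then have "bform q k x u = 0" for x
    unfolding perp_def by blast
  moreover obtain a b where u: "u = (a, b)"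
    by fastforce
  ultimately have "trace q k (x * a) = 0" "trace q k (x * b) = 0" for x
    using bform_Pair[of q k x 0 a b] bform_Pair[of q k 0 x a b] by simp_all
  then show "u \<in> {(0, 0)}"
    using trace_mult_eq_zero_imp_eq_zero u by blast
qed (simp add: perp_def bform_zero_right)

lemma perp_plus_line:
  assumes "fq_subspace q W"
  shows "perp q k (plus_line q W v) = perp q k W \<inter> perp q k {v :: 'a \<times> 'a}"
proof
  have "perp q k (plus_line q W v) \<subseteq> perp q k W"
    by (rule perp_antimono[OF subset_plus_line])
  moreover have "perp q k (plus_line q W v) \<subseteq> perp q k {v}"
    using mem_plus_line[OF assms] by (intro perp_antimono) simp
  ultimately show "perp q k (plus_line q W v) \<subseteq> perp q k W \<inter> perp q k {v}"
    by blast
  show "perp q k W \<inter> perp q k {v} \<subseteq> perp q k (plus_line q W v)"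
    by (auto simp: perp_def plus_line_def bform_add_left bform_smult_left)
qed

section \<open>Orthogonal complements\<close>

text \<open>P is the direct sum of the kernel of u |-> bform q k v u and the line through a multiple of w.\<close>

lemma card_subspace_eq_card_Fq_mult_card_kernel:
  assumes P: "fq_subspace q P" and w: "w \<in> P" "bform q k v w \<noteq> 0"
  shows "card P = card (Fq q :: 'a set) * card (P \<inter> perp q k {v :: 'a \<times> 'a})"
proof -
  define K where "K = P \<inter> perp q k {v}"
  define w' where "w' = vsmult (1 / bform q k v w) w"
  have K: "fq_subspace q K"
    unfolding K_def by (intro fq_subspace_Int P perp_subspace)
  have w': "w' \<in> P" "bform q k v w' = 1"
    using P w Fq_divide[OF Fq_one bform_in_Fq] unfolding w'_def fq_subspace_def
    by (auto simp: bform_smult_right)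
  have "P = plus_line q K w'"
  proof
    show "plus_line q K w' \<subseteq> P"
      by (rule plus_line_subset[OF P _ w'(1)]) (simp add: K_def)
  next
    show "P \<subseteq> plus_line q K w'"
    proof
      fix u assume u: "u \<in> P"
      define c where "c = bform q k v u"
      have c: "c \<in> Fq q" "- c \<in> Fq q"
        unfolding c_def by (simp_all add: bform_in_Fq Fq_uminus)
      have "vadd u (vsmult (- c) w') \<in> K"
        using P u w' c unfolding K_def fq_subspace_def
        by (auto simp: perp_def bform_add_right bform_smult_right c_def)
      moreover have "u = vadd (vadd u (vsmult (- c) w')) (vsmult c w')"
        by (cases u; cases w') simp
      ultimately show "u \<in> plus_line q K w'"
        unfolding plus_line_def using c by blast
    qed
  qed
  moreover have "w' \<notin> K"
    using w' by (simp add: K_def perp_def)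
  ultimately show ?thesis
    using card_plus_line[OF K] unfolding K_def by metis
qed

lemma card_subspace_le_card_Fq_mult_card_kernel:
  assumes P: "fq_subspace q P"
  shows "card P \<le> card (Fq q :: 'a set) * card (P \<inter> perp q k {v :: 'a \<times> 'a})"
proof (cases "\<exists>w\<in>P. bform q k v w \<noteq> 0")
  case True
  then show ?thesis
    using card_subspace_eq_card_Fq_mult_card_kernel[OF P] by fastforce
next
  case False
  then have "P \<inter> perp q k {v} = P"
    by (auto simp: perp_def)
  moreover have "card (Fq q :: 'a set) \<ge> 1"
    using Fq_zero by (metis One_nat_def Suc_leI card_gt_0_iff empty_iff finite)
  ultimately show ?thesis
    by simp
qed

lemma card_mult_card_perp_le_plus_line:
  assumes W: "fq_subspace q W" and v: "v \<notin> W"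
  shows "card W * card (perp q k W)
    \<le> card (plus_line q W v) * card (perp q k (plus_line q W (v :: 'a \<times> 'a)))"
proof -
  have "card (perp q k W) \<le> card (Fq q :: 'a set) * card (perp q k (plus_line q W v))"
    using card_subspace_le_card_Fq_mult_card_kernel[OF perp_subspace] perp_plus_line[OF W] by simp
  then have "card W * card (perp q k W)
      \<le> card W * (card (Fq q :: 'a set) * card (perp q k (plus_line q W v)))"
    by simp
  then show ?thesis
    by (simp add: card_plus_line[OF W v])
qed

text \<open>
  Adjoining a vector multiplies |W| by |F_q| and divides |W^perp| by at most |F_q|; comparing
  with {0} and with the whole space gives both bounds of card_mult_card_perp.
\<close>

lemma card_mult_card_perp_mono:
  assumes "fq_subspace q W" "fq_subspace q U" "W \<subseteq> (U :: ('a \<times> 'a) set)"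
  shows "card W * card (perp q k W) \<le> card U * card (perp q k U)"
  using assms
proof (induction "card U - card W" arbitrary: W rule: less_induct)
  case less
  show ?case
  proof (cases "W = U")
    case False
    then obtain v where v: "v \<in> U" "v \<notin> W"
      using less.prems by blast
    define W' where "W' = plus_line q W v"
    have W': "fq_subspace q W'" "W' \<subseteq> U"
      unfolding W'_def using less.prems v
      by (simp_all add: fq_subspace_plus_line plus_line_subset)
    have "W \<subset> W'"
      unfolding W'_def using subset_plus_line mem_plus_line[OF less.prems(1)] v by blast
    then have "card W < card W'" "card W' \<le> card U"
      using W' by (simp_all add: psubset_card_mono card_mono)
    then have "card W' * card (perp q k W') \<le> card U * card (perp q k U)"
      using less.hyps[of W'] W' less.prems(2) by simp
    then show ?thesis
      using card_mult_card_perp_le_plus_line[OF less.prems(1) v(2)] W'_def by simp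
  qed simp
qed

lemma card_mult_card_perp:
  assumes "fq_subspace q (W :: ('a \<times> 'a) set)"
  shows "card W * card (perp q k W) = card (UNIV :: ('a \<times> 'a) set)"
proof (rule antisym)
  have "fq_subspace q (UNIV :: ('a \<times> 'a) set)" "fq_subspace q {(0 :: 'a, 0 :: 'a)}"
    by (simp_all add: fq_subspace_def)
  then show "card W * card (perp q k W) \<le> card (UNIV :: ('a \<times> 'a) set)"
    and "card (UNIV :: ('a \<times> 'a) set) \<le> card W * card (perp q k W)"
    using card_mult_card_perp_mono[of W UNIV] card_mult_card_perp_mono[of "{(0, 0)}" W] assms
    by (simp_all add: perp_UNIV perp_zero fq_subspace_def)
qed

lemma perp_perp:
  assumes "fq_subspace q (W :: ('a \<times> 'a) set)"
  shows "perp q k (perp q k W) = W"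
proof -
  have "card (perp q k W) * card (perp q k (perp q k W)) = card (perp q k W) * card W"
    using card_mult_card_perp[OF perp_subspace] card_mult_card_perp[OF assms]
    by (simp add: mult.commute)
  moreover have "card (perp q k W) > 0"
    using perp_subspace[of W] unfolding fq_subspace_def by (auto simp: card_gt_0_iff)
  ultimately have "card (perp q k (perp q k W)) = card W"
    by auto
  then show ?thesis
    using card_subset_eq[OF finite subset_perp_perp[of W]] by simp
qed

lemma perp_subset_perp_iff:
  assumes "fq_subspace q U" "fq_subspace q (W :: ('a \<times> 'a) set)"
  shows "perp q k W \<subseteq> perp q k U \<longleftrightarrow> U \<subseteq> W"
  using perp_antimono[of "perp q k W" "perp q k U" q k] perp_antimono[of U W q k]
  by (auto simp: perp_perp assms)

lemma correlation_image_perp: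
  assumes f: "fq_linear q f" "bij f"
  shows "correlation q (\<lambda>U. f ` perp q k (U :: ('a \<times> 'a) set))"
  unfolding correlation_def bij_betw_def
proof (intro conjI ballI)
  show "inj_on (\<lambda>U. f ` perp q k U) (subspaces q)"
  proof (rule inj_onI)
    fix U W :: "('a \<times> 'a) set"
    assume "U \<in> subspaces q" "W \<in> subspaces q" "f ` perp q k U = f ` perp q k W"
    then show "U = W"
      using bij_is_inj[OF f(2)] perp_perp
      by (metis inj_image_eq_iff mem_Collect_eq subspaces_def)
  qed
  show "(\<lambda>U. f ` perp q k U) ` subspaces q = subspaces q"
  proof
    show "(\<lambda>U. f ` perp q k U) ` subspaces q \<subseteq> subspaces q"
      using fq_subspace_image[OF f(1) perp_subspace] by (auto simp: subspaces_def)
    show "subspaces q \<subseteq> (\<lambda>U. f ` perp q k U) ` subspaces q"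
    proof
      fix T :: "('a \<times> 'a) set" assume "T \<in> subspaces q"
      then have "perp q k (perp q k (f -` T)) = f -` T"
        by (simp add: perp_perp fq_subspace_vimage f(1) subspaces_def)
      then have "T = f ` perp q k (perp q k (f -` T))"
        by (simp add: bij_is_surj[OF f(2)] surj_image_vimage_eq)
      moreover have "perp q k (f -` T) \<in> subspaces q"
        by (simp add: perp_subspace subspaces_def)
      ultimately show "T \<in> (\<lambda>U. f ` perp q k U) ` subspaces q"
        by blast
    qed
  qed
  fix U W :: "('a \<times> 'a) set" assume "U \<in> subspaces q" "W \<in> subspaces q"
  then show "U \<subseteq> W \<longleftrightarrow> f ` perp q k W \<subseteq> f ` perp q k U"
    by (simp add: inj_image_subset_iff bij_is_inj[OF f(2)] perp_subset_perp_iff subspaces_def)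
qed

section \<open>The code and its correlations\<close>

lemma trace_linpoly_mult:
  "trace q k (linpoly q k \<delta> a x * y) = trace q k ((x::'a) * linpoly_adjoint q k \<delta> a y)"
proof -
  have "trace q k ((a i * y) * x ^ (q ^ i)) = trace q k (x * (a i * y) ^ (q ^ (k - i)))"
    if "i \<le> k - \<delta>" for i
  proof -
    have "trace q k ((a i * y) * x ^ (q ^ i)) = trace q k (((a i * y) * x ^ (q ^ i)) ^ (q ^ (k - i)))"
      by (rule trace_power_q_power[symmetric])
    also have "\<dots> = trace q k (x * (a i * y) ^ (q ^ (k - i)))"
      using that power_q_power_k[of x]
      by (simp add: power_mult_distrib mult.commute flip: power_mult power_add)
    finally show ?thesis .
  qed
  then show ?thesis
    unfolding linpoly_def linpoly_adjoint_def sum_distrib_right sum_distrib_left trace_sum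
    by (intro sum.cong) (simp_all add: mult_ac)
qed

lemma perp_gsub:
  "perp q k (gsub q k \<delta> a) = range (\<lambda>y::'a. (- linpoly_adjoint q k \<delta> a y, y))"
proof -
  have form: "bform q k (x, linpoly q k \<delta> a x) (u, y)
      = trace q k (x * (u + linpoly_adjoint q k \<delta> a y))" for x u y
    by (simp add: bform_Pair trace_add trace_linpoly_mult distrib_left)
  have "(u, y) \<in> perp q k (gsub q k \<delta> a) \<longleftrightarrow> u = - linpoly_adjoint q k \<delta> a y" for u y
  proof
    assume "(u, y) \<in> perp q k (gsub q k \<delta> a)"
    then have "trace q k (x * (u + linpoly_adjoint q k \<delta> a y)) = 0" for x
      by (simp add: perp_def gsub_eq_range form)
    then show "u = - linpoly_adjoint q k \<delta> a y"
      using trace_mult_eq_zero_imp_eq_zero by (simp add: eq_neg_iff_add_eq_0)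
  next
    assume "u = - linpoly_adjoint q k \<delta> a y"
    then show "(u, y) \<in> perp q k (gsub q k \<delta> a)"
      using q_pos by (simp add: perp_def gsub_eq_range form trace_def power_0_left)
  qed
  then show ?thesis
    by auto
qed

lemma phi_image_perp_gsub:
  assumes "\<delta> \<le> k"
  shows "phi q \<delta> ` perp q k (gsub q k \<delta> a)
    = gsub q k \<delta> (\<lambda>j. a (k - \<delta> - j) ^ (q ^ (\<delta> + j)) :: 'a)"
proof -
  let ?f = "linpoly q k \<delta> (\<lambda>j. a (k - \<delta> - j) ^ (q ^ (\<delta> + j)) :: 'a)"
  have "phi q \<delta> ` perp q k (gsub q k \<delta> a) = (\<lambda>y. (y ^ (q ^ \<delta>), ?f (y ^ (q ^ \<delta>)))) ` UNIV"
    unfolding perp_gsub linpoly_adjoint_eq_linpoly[OF assms] by (auto simp: phi_def image_iff)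
  also have "\<dots> = (\<lambda>x. (x, ?f x)) ` range (\<lambda>y. y ^ (q ^ \<delta>))"
    by (simp add: image_image)
  also have "range (\<lambda>y::'a. y ^ (q ^ \<delta>)) = UNIV"
    using frobenius_surj by (metis surj_def)
  also have "(\<lambda>x. (x, ?f x)) ` UNIV = gsub q k \<delta> (\<lambda>j. a (k - \<delta> - j) ^ (q ^ (\<delta> + j)))"
    by (simp add: gsub_eq_range)
  finally show ?thesis .
qed

lemma image_phi_perp_Gcode:
  assumes "\<delta> \<le> k"
  shows "(\<lambda>X. phi q \<delta> ` perp q k X) ` Gcode q k \<delta> = (Gcode q k \<delta> :: ('a \<times> 'a) set set)"
proof (intro equalityI subsetI)
  fix Y assume "Y \<in> (\<lambda>X. phi q \<delta> ` perp q k X) ` (Gcode q k \<delta> :: ('a \<times> 'a) set set)"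
  then show "Y \<in> Gcode q k \<delta>"
    using phi_image_perp_gsub[OF assms] by (auto simp: Gcode_def)
next
  fix Y :: "('a \<times> 'a) set" assume "Y \<in> Gcode q k \<delta>"
  then obtain c where Y: "Y = gsub q k \<delta> c"
    by (auto simp: Gcode_def)
  obtain root :: "nat \<Rightarrow> 'a \<Rightarrow> 'a" where root: "\<And>i y. root i y ^ (q ^ i) = y"
    using frobenius_surj by metis
  define a where "a i = root (k - i) (c (k - \<delta> - i))" for i
  have "a (k - \<delta> - j) ^ (q ^ (\<delta> + j)) = c j" if "j \<le> k - \<delta>" for j
    using that assms root by (simp add: a_def)
  then have "gsub q k \<delta> (\<lambda>j. a (k - \<delta> - j) ^ (q ^ (\<delta> + j))) = Y"
    unfolding Y gsub_eq_range linpoly_def by (metis (no_types, lifting) atMost_iff sum.cong)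
  then show "Y \<in> (\<lambda>X. phi q \<delta> ` perp q k X) ` Gcode q k \<delta>"
    using phi_image_perp_gsub[OF assms, of a] by (auto simp: Gcode_def)
qed

lemma phi_image_perp_S: "phi q \<delta> ` perp q k ({0} \<times> UNIV) = {0} \<times> (UNIV :: 'a set)"
proof -
  have "(u, v) \<in> perp q k ({0} \<times> UNIV) \<longleftrightarrow> v = 0" for u v :: 'a
  proof
    assume "(u, v) \<in> perp q k ({0} \<times> UNIV)"
    then have "trace q k (y * v) = 0" for y
      by (auto simp: perp_def bform_Pair)
    then show "v = 0"
      by (rule trace_mult_eq_zero_imp_eq_zero)
  next
    assume "v = 0"
    then show "(u, v) \<in> perp q k ({0} \<times> UNIV)"
      using q_pos by (auto simp: perp_def bform_Pair trace_def power_0_left)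
  qed
  then have "perp q k ({0} \<times> UNIV) = (UNIV :: 'a set) \<times> {0}"
    by auto
  moreover have "phi q \<delta> (x, 0) = (0, - x)" for x :: 'a
    using q_pos by (simp add: phi_def power_0_left)
  ultimately show ?thesis
    by (auto simp: image_iff) (metis minus_minus)
qed

lemma correlation_preserving_Gcode_fixes_S:
  assumes "\<delta> \<le> k" and c: "correlation q c" "c ` Gcode q k \<delta> = Gcode q k \<delta>"
  shows "c ({0} \<times> UNIV) = {0} \<times> (UNIV :: 'a set)"
proof -
  let ?c0 = "\<lambda>U. phi q \<delta> ` perp q k (U :: ('a \<times> 'a) set)"
  have "correlation q ?c0"
    by (rule correlation_image_perp[OF fq_linear_phi bij_phi])
  moreover have "?c0 ` Gcode q k \<delta> = Gcode q k \<delta>"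
    by (rule image_phi_perp_Gcode[OF assms(1)])
  moreover have "(Gcode q k \<delta> :: ('a \<times> 'a) set set) \<subseteq> subspaces q"
    using fq_subspace_gsub by (auto simp: Gcode_def subspaces_def)
  moreover have "{0} \<times> (UNIV :: 'a set) \<in> subspaces q"
    by (simp add: subspaces_def fq_subspace_def)
  ultimately have "c ({0} \<times> UNIV) = ?c0 ({0} \<times> UNIV)"
    using c meets_bot_S meets_bot_imp_subset_S unfolding correlation_def
    by (intro antitone_bijs_agree_on_greatest_meets_bot[of c "subspaces q" "Gcode q k \<delta>" ?c0]) simp_all
  then show ?thesis
    by (simp add: phi_image_perp_S)
qed

end

end

theorem mainTheorem7:
  fixes q k \<delta> :: nat
  assumes "\<exists>p m. prime p \<and> m > 0 \<and> q = p ^ m"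
    and "card (UNIV :: 'a::{finite,field} set) = q ^ k"
    and "1 \<le> \<delta>" and "\<delta> \<le> k"
  shows "(\<exists>\<phi> :: 'a \<times> 'a \<Rightarrow> 'a \<times> 'a. fq_linear q \<phi> \<and> bij \<phi>
            \<and> (\<forall>X\<in>Gcode q k \<delta>. \<phi> ` perp q k X \<in> Gcode q k \<delta>)
            \<and> (\<lambda>X. \<phi> ` perp q k X) ` Gcode q k \<delta> = Gcode q k \<delta>)
       \<and> (\<exists>c. correlation q c \<and> c ` (Gcode q k \<delta> :: ('a \<times> 'a) set set) = Gcode q k \<delta>)
       \<and> (\<forall>c. correlation q c \<and> c ` (Gcode q k \<delta> :: ('a \<times> 'a) set set) = Gcode q k \<delta>
              \<longrightarrow> c ({0} \<times> UNIV) = {0} \<times> UNIV)"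
proof -
  obtain p m where "prime p" "q = p ^ m"
    using assms(1) by blast
  moreover from this have "CHAR('a) = p"
    using CHAR_eq_prime_of_card_UNIV[of p "m * k"] assms(2) by (simp add: power_mult)
  ultimately have q: "q = CHAR('a) ^ m"
    by simp
  note card_UNIV = assms(2) and \<delta> = assms(4)
  let ?c = "\<lambda>X. phi q \<delta> ` perp q k X :: ('a \<times> 'a) set"
  have linear: "fq_linear q (phi q \<delta> :: 'a \<times> 'a \<Rightarrow> 'a \<times> 'a)"
    and bij: "bij (phi q \<delta> :: 'a \<times> 'a \<Rightarrow> 'a \<times> 'a)"
    by (rule fq_linear_phi[OF q], rule bij_phi[OF q])
  have preserves: "?c ` Gcode q k \<delta> = Gcode q k \<delta>"
    by (rule image_phi_perp_Gcode[OF q card_UNIV \<delta>])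
  have correlation: "correlation q ?c"
    by (rule correlation_image_perp[OF q card_UNIV linear bij])
  show ?thesis
    using linear bij preserves correlation correlation_preserving_Gcode_fixes_S[OF q card_UNIV \<delta>]
    by (auto simp flip: image_subset_iff intro!: exI[of _ "phi q \<delta>"] exI[of _ ?c])
qed

end
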